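(* Let $A:[1,\infty)\to\mathbb R^{d\times d}$ be continuous with evolution family $T(t,s)$ for $x'=A(t)x$, and let $\mathcal S=\{\|\cdot\|_t;\ t\ge1\}$ be a family of norms on $\mathbb R^d$. Assume there exist $K,a>0$ with $\|T(t,s)x\|_t\le K(t/s)^a\|x\|_s$ and $\|T(s,t)x\|_s\le K(t/s)^a\|x\|_t$ for all $t\ge s\ge1$ and $x\in\mathbb R^d$. Then the following are equivalent: (a) $x'=A(t)x$ admits a strong polynomial dichotomy with respect to $\mathcal S$; (b) the sequence $(A_n)_{n\in\mathbb N}$, $A_n=T(n+1,n)$, admits a strong polynomial dichotomy with respect to the sequence of norms $\{\|\cdot\|_n;\ n\in\mathbb N\}$.
   Context: $\mathbb N=\{1,2,\dots\}$. Strong polynomial dichotomy of $x'=A(t)x$ w.r.t. $\{\|\cdot\|_t\}$: there exist $K>0$, $a\ge\lambda>0$ and projections $P(t)$ with $P(t)T(t,s)=T(t,s)P(s)$ for $t\ge s\ge1$ and, for $t\ge s\ge1$, $x$, $Q(t)=\mathrm{Id}-P(t)$: $\|T(t,s)P(s)x\|_t\le K(t/s)^{-\lambda}\|x\|_s$, $\|T(s,t)Q(t)x\|_s\le K(t/s)^{-\lambda}\|x\|_t$, $\|T(t,s)x\|_t\le K(t/s)^a\|x\|_s$, $\|T(s,t)x\|_s\le K(t/s)^a\|x\|_t$. For a sequence $(A_n)_{n\in\mathbb N}$: $\mathcal A(m,n)=A_{m-1}\cdots A_n$ ($m>n$), $\mathrm{Id}$ ($m=n$), $A_m^{-1}\cdots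 A_{n-1}^{-1}$ ($m<n$). Strong polynomial dichotomy w.r.t. $\{\|\cdot\|_n\}$: there exist $K>0$, $a\ge\lambda>0$ and projections $P_n$ with $A_nP_n=P_{n+1}A_n$ and, for $m\ge n$, $x$: $\|\mathcal A(m,n)P_nx\|_m\le K(m/n)^{-\lambda}\|x\|_n$, $\|\mathcal A(n,m)Q_mx\|_n\le K(m/n)^{-\lambda}\|x\|_m$, $\|\mathcal A(m,n)x\|_m\le K(m/n)^a\|x\|_n$, $\|\mathcal A(n,m)x\|_n\le K(m/n)^a\|x\|_m$. *)

theory Defs
  imports "HOL-Analysis.Analysis"
begin

type_synonym 'd mat = "real^'d^'d"

definition is_norm :: "(real^'d::finite \<Rightarrow> real) \<Rightarrow> bool" where
  "is_norm N \<longleftrightarrow> (\<forall>x. N x = 0 \<longleftrightarrow> x = 0) \<and> (\<forall>c x. N (c *\<^sub>R x) = \<bar>c\<bar> * N x)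
     \<and> (\<forall>x y. N (x + y) \<le> N x + N y)"

definition is_evolution_family :: "(real \<Rightarrow> ('d::finite) mat) \<Rightarrow> (real \<Rightarrow> real \<Rightarrow> 'd mat) \<Rightarrow> bool" where
  "is_evolution_family A T \<longleftrightarrow>
     (\<forall>s\<ge>1. T s s = mat 1 \<and>
        (\<forall>t\<ge>1. ((\<lambda>\<tau>. T \<tau> s) has_vector_derivative (A t ** T t s)) (at t within {1..})))"

definition strong_poly_dichotomy_cont ::
  "(real \<Rightarrow> real \<Rightarrow> ('d::finite) mat) \<Rightarrow> (real \<Rightarrow> real^'d \<Rightarrow> real) \<Rightarrow> bool" where
  "strong_poly_dichotomy_cont T N \<longleftrightarrow>
     (\<exists>K a lam (P :: real \<Rightarrow> 'd mat). K > 0 \<and> a \<ge> lam \<and> lam > 0 \<and>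
        (\<forall>t\<ge>1. P t ** P t = P t) \<and>
        (\<forall>t s. 1 \<le> s \<and> s \<le> t \<longrightarrow> P t ** T t s = T t s ** P s) \<and>
        (\<forall>t s x. 1 \<le> s \<and> s \<le> t \<longrightarrow>
           N t (T t s *v (P s *v x)) \<le> K * (t / s) powr (-lam) * N s x \<and>
           N s (T s t *v ((mat 1 - P t) *v x)) \<le> K * (t / s) powr (-lam) * N t x \<and>
           N t (T t s *v x) \<le> K * (t / s) powr a * N s x \<and>
           N s (T s t *v x) \<le> K * (t / s) powr a * N t x))"

fun prodA :: "(nat \<Rightarrow> ('d::finite) mat) \<Rightarrow> nat \<Rightarrow> nat \<Rightarrow> 'd mat" where
  "prodA As n 0 = mat 1"
| "prodA As n (Suc k) = As (n + k) ** prodA As n k"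

text \<open>calA(m,n): A_{m-1}\<cdots>A_n for m \<ge> n, and
  A_m^{-1}\<cdots>A_{n-1}^{-1} = (A_{n-1}\<cdots>A_m)^{-1} for m < n.\<close>
definition calA :: "(nat \<Rightarrow> ('d::finite) mat) \<Rightarrow> nat \<Rightarrow> nat \<Rightarrow> 'd mat" where
  "calA As m n = (if n \<le> m then prodA As n (m - n) else matrix_inv (prodA As m (n - m)))"

definition strong_poly_dichotomy_disc ::
  "(nat \<Rightarrow> ('d::finite) mat) \<Rightarrow> (nat \<Rightarrow> real^'d \<Rightarrow> real) \<Rightarrow> bool" where
  "strong_poly_dichotomy_disc As N \<longleftrightarrow>
     (\<exists>K a lam (P :: nat \<Rightarrow> 'd mat). K > 0 \<and> a \<ge> lam \<and> lam > 0 \<and>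
        (\<forall>n\<ge>1. P n ** P n = P n) \<and>
        (\<forall>n\<ge>1. As n ** P n = P (Suc n) ** As n) \<and>
        (\<forall>m n x. 1 \<le> n \<and> n \<le> m \<longrightarrow>
           N m (calA As m n *v (P n *v x)) \<le> K * (real m / real n) powr (-lam) * N n x \<and>
           N n (calA As n m *v ((mat 1 - P m) *v x)) \<le> K * (real m / real n) powr (-lam) * N m x \<and>
           N m (calA As m n *v x) \<le> K * (real m / real n) powr a * N n x \<and>
           N n (calA As n m *v x) \<le> K * (real m / real n) powr a * N m x))"

end

theory Submission
  imports Defs
begin

text \<open>Both directions compare \<open>T\<close> with its integer samples through the cocycle identity
  \<open>T(t,r) T(r,s) = T(t,s)\<close>, which follows from uniqueness for the linear equation: a Gronwall
  estimate for \<open>|y|\<^sup>2\<close> shows that a solution vanishing at one time vanishes everywhere.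
  Restricting a continuous dichotomy to integer times gives a discrete one, because the products
  \<open>\<A>(m,n)\<close> are exactly \<open>T(m,n)\<close>. Conversely, the discrete projections are transported to
  real times by \<open>P(t) = T(t,m) P\<^sub>m T(m,t)\<close> with \<open>m = \<lfloor>t\<rfloor>\<close>; the growth bound costs a
  factor \<open>K 2\<^sup>a\<close> on each of the two intervals of length less than one, and replacing \<open>m/n\<close>
  by \<open>t/s\<close> costs a factor \<open>2\<^sup>\<lambda>\<close>.\<close>

lemma bounded_bilinear_matrix_matrix_mult:
  "bounded_bilinear ((**) :: real^'n::finite^'m::finite \<Rightarrow> real^'k::finite^'n \<Rightarrow> real^'k^'m)"
  unfolding bilinear_conv_bounded_bilinear[symmetric] bilinear_def
  by (auto intro!: linearI simp: matrix_matrix_mult_def vec_eq_iff sum.distrib algebra_simps sum_distrib_left)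

lemmas matrix_mul_diff_left = bounded_bilinear.diff_left[OF bounded_bilinear_matrix_matrix_mult]
lemmas matrix_mul_diff_right = bounded_bilinear.diff_right[OF bounded_bilinear_matrix_matrix_mult]

lemma abs_deriv_le_self_zero_iff:
  fixes f f' :: "real \<Rightarrow> real"
  assumes "a \<le> b"
    and cont: "continuous_on {a..b} f"
    and deriv: "\<And>x. a < x \<Longrightarrow> x < b \<Longrightarrow> (f has_real_derivative f' x) (at x)"
    and bound: "\<And>x. a < x \<Longrightarrow> x < b \<Longrightarrow> \<bar>f' x\<bar> \<le> c * f x"
    and nonneg: "\<And>x. a \<le> x \<Longrightarrow> x \<le> b \<Longrightarrow> 0 \<le> f x"
  shows "f a = 0 \<longleftrightarrow> f b = 0"
proof -
  have exp_deriv: "((\<lambda>x. exp (k * x) * f x) has_real_derivative exp (k * x) * (k * f x + f' x)) (at x)"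
    if "a < x" "x < b" for k x
    by (rule derivative_eq_intros deriv that refl | simp add: algebra_simps)+
  have exp_cont: "continuous_on {a..b} (\<lambda>x. exp (k * x) * f x)" for k
    by (intro continuous_intros cont)
  have "exp (- c * b) * f b \<le> exp (- c * a) * f a"
  proof (rule DERIV_nonpos_imp_decreasing_open[OF \<open>a \<le> b\<close> _ exp_cont])
    fix x assume "a < x" "x < b"
    moreover have "- c * f x + f' x \<le> 0"
      using bound[of x] \<open>a < x\<close> \<open>x < b\<close> by linarith
    ultimately show "\<exists>y. ((\<lambda>x. exp (- c * x) * f x) has_real_derivative y) (at x) \<and> y \<le> 0"
      using exp_deriv[of x "- c"] \<open>a < x\<close> \<open>x < b\<close> by (intro exI conjI) (auto intro: mult_nonneg_nonpos)
  qed
  moreover have "exp (c * a) * f a \<le> exp (c * b) * f b"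
  proof (rule DERIV_nonneg_imp_increasing_open[OF \<open>a \<le> b\<close> _ exp_cont])
    fix x assume "a < x" "x < b"
    with exp_deriv[of x c] bound[of x] show "\<exists>y. ((\<lambda>x. exp (c * x) * f x) has_real_derivative y) (at x) \<and> 0 \<le> y"
      by auto
  qed
  ultimately show ?thesis
    using nonneg[of a] nonneg[of b] \<open>a \<le> b\<close> by (auto simp: mult_le_0_iff)
qed

lemma norm_deriv_le_self_zero_iff:
  fixes y y' :: "real \<Rightarrow> 'a::real_inner"
  assumes "a \<le> b"
    and deriv: "\<And>t. t \<in> {a..b} \<Longrightarrow> (y has_vector_derivative y' t) (at t within {a..b})"
    and bound: "\<And>t. t \<in> {a..b} \<Longrightarrow> norm (y' t) \<le> L * norm (y t)"
  shows "y a = 0 \<longleftrightarrow> y b = 0"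
proof -
  have "(\<lambda>t. y t \<bullet> y t) a = 0 \<longleftrightarrow> (\<lambda>t. y t \<bullet> y t) b = 0"
  proof (rule abs_deriv_le_self_zero_iff[OF \<open>a \<le> b\<close>])
    have "continuous_on {a..b} y"
      using deriv has_vector_derivative_continuous continuous_on_eq_continuous_within by blast
    then show "continuous_on {a..b} (\<lambda>t. y t \<bullet> y t)"
      by (intro continuous_intros)
  next
    fix t assume t: "a < t" "t < b"
    then have "(y has_vector_derivative y' t) (at t)"
      using deriv[of t] by (simp add: at_within_Icc_at)
    then show "((\<lambda>t. y t \<bullet> y t) has_real_derivative 2 * (y t \<bullet> y' t)) (at t)"
      by (auto intro!: derivative_eq_intros simp: has_vector_derivative_def has_field_derivative_def
          inner_commute algebra_simps)
    have "\<bar>2 * (y t \<bullet> y' t)\<bar> \<le> 2 * (norm (y t) * norm (y' t))"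
      using Cauchy_Schwarz_ineq2[of "y t" "y' t"] by (simp add: abs_mult)
    also have "\<dots> \<le> 2 * (norm (y t) * (L * norm (y t)))"
      using bound[of t] t by (simp add: mult_left_mono)
    also have "\<dots> = 2 * L * (y t \<bullet> y t)"
      by (simp add: dot_square_norm power2_eq_square)
    finally show "\<bar>2 * (y t \<bullet> y' t)\<bar> \<le> 2 * L * (y t \<bullet> y t)" .
  qed simp
  then show ?thesis by simp
qed

lemma matrix_ode_zero_unique:
  fixes A Y :: "real \<Rightarrow> real^'n::finite^'n"
  assumes contA: "continuous_on {1..} A"
    and deriv: "\<And>t. 1 \<le> t \<Longrightarrow> (Y has_vector_derivative A t ** Y t) (at t within {1..})"
    and "1 \<le> r" "Y r = 0" "1 \<le> t"
  shows "Y t = 0"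
proof -
  define a b where "a = min r t" and "b = max r t"
  have "compact (A ` {a..b})"
    using \<open>1 \<le> r\<close> \<open>1 \<le> t\<close>
    by (intro compact_continuous_image continuous_on_subset[OF contA]) (auto simp: a_def)
  then obtain M where M: "\<And>t. t \<in> {a..b} \<Longrightarrow> norm (A t) \<le> M"
    by (meson compact_imp_bounded bounded_iff imageI)
  obtain C where "C > 0" and C: "\<And>(X :: real^'n^'n) (Z :: real^'n^'n). norm (X ** Z) \<le> norm X * norm Z * C"
    using bounded_bilinear.pos_bounded[OF bounded_bilinear_matrix_matrix_mult] by blast
  have "Y a = 0 \<longleftrightarrow> Y b = 0"
  proof (rule norm_deriv_le_self_zero_iff)
    fix s assume s: "s \<in> {a..b}"
    then have "1 \<le> s" using \<open>1 \<le> r\<close> \<open>1 \<le> t\<close> by (auto simp: a_def)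
    then show "(Y has_vector_derivative A s ** Y s) (at s within {a..b})"
      using \<open>1 \<le> r\<close> \<open>1 \<le> t\<close>
      by (intro has_vector_derivative_within_subset[OF deriv]) (auto simp: a_def)
    have "norm (A s) * (norm (Y s) * C) \<le> M * (norm (Y s) * C)"
      using M[OF s] \<open>C > 0\<close> by (simp add: mult_right_mono)
    then show "norm (A s ** Y s) \<le> M * C * norm (Y s)"
      using C[of "A s" "Y s"] by (simp add: algebra_simps)
  qed (simp add: a_def b_def)
  then show ?thesis
    using \<open>Y r = 0\<close> by (auto simp: a_def b_def min_def max_def split: if_splits)
qed

lemma evolution_family_cocycle:
  fixes A :: "real \<Rightarrow> real^'n::finite^'n"
  assumes contA: "continuous_on {1..} A" and evol: "is_evolution_family A T"
    and "1 \<le> t" "1 \<le> r" "1 \<le> s"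
  shows "T t r ** T r s = T t s"
proof -
  have deriv: "\<And>u \<tau>. 1 \<le> u \<Longrightarrow> 1 \<le> \<tau> \<Longrightarrow>
      ((\<lambda>\<tau>. T \<tau> u) has_vector_derivative A \<tau> ** T \<tau> u) (at \<tau> within {1..})"
    and "T r r = mat 1"
    using evol \<open>1 \<le> r\<close> unfolding is_evolution_family_def by auto
  have "(\<lambda>\<tau>. T \<tau> s - T \<tau> r ** T r s) t = 0"
  proof (rule matrix_ode_zero_unique[OF contA _ \<open>1 \<le> r\<close> _ \<open>1 \<le> t\<close>])
    fix \<tau> :: real assume "1 \<le> \<tau>"
    have "((\<lambda>\<tau>. T \<tau> r ** T r s) has_vector_derivative (A \<tau> ** T \<tau> r) ** T r s) (at \<tau> within {1..})"
      using bounded_bilinear.bounded_linear_left[OF bounded_bilinear_matrix_matrix_mult]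
        deriv[OF \<open>1 \<le> r\<close> \<open>1 \<le> \<tau>\<close>] by (rule bounded_linear.has_vector_derivative)
    with deriv[OF \<open>1 \<le> s\<close> \<open>1 \<le> \<tau>\<close>]
    have "((\<lambda>\<tau>. T \<tau> s - T \<tau> r ** T r s) has_vector_derivative
        A \<tau> ** T \<tau> s - (A \<tau> ** T \<tau> r) ** T r s) (at \<tau> within {1..})"
      by (rule has_vector_derivative_diff)
    then show "((\<lambda>\<tau>. T \<tau> s - T \<tau> r ** T r s) has_vector_derivative
        A \<tau> ** (T \<tau> s - T \<tau> r ** T r s)) (at \<tau> within {1..})"
      by (simp add: matrix_mul_diff_right matrix_mul_assoc)
  qed (simp add: \<open>T r r = mat 1\<close>)
  then show ?thesis by simp
qed

lemma matrix_inv_unique: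
  fixes A B :: "'a::semiring_1^'n^'n"
  assumes "A ** B = mat 1" "B ** A = mat 1"
  shows "matrix_inv A = B"
proof -
  let ?C = "matrix_inv A"
  have C: "A ** ?C = mat 1 \<and> ?C ** A = mat 1"
    unfolding matrix_inv_def by (rule someI[of _ B]) (simp add: assms)
  have "?C = (?C ** A) ** B"
    by (simp flip: matrix_mul_assoc add: assms)
  then show ?thesis using C by simp
qed

lemma is_norm_nonneg:
  assumes "is_norm N" shows "0 \<le> N x"
proof -
  have "N 0 \<le> N x + N (- x)"
    using assms unfolding is_norm_def by (metis add.right_inverse)
  moreover have "N (- x) = N x" and "N 0 = 0"
    using assms unfolding is_norm_def by (metis abs_minus_cancel abs_one mult_1 scaleR_minus1_left)+
  ultimately show ?thesis by simp
qed

lemma prodA_commute: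
  assumes "\<And>j. n \<le> j \<Longrightarrow> As j ** P j = P (Suc j) ** As j"
  shows "prodA As n k ** P n = P (n + k) ** prodA As n k"
proof (induction k)
  case (Suc k)
  have "prodA As n (Suc k) ** P n = As (n + k) ** (P (n + k) ** prodA As n k)"
    by (simp add: Suc.IH flip: matrix_mul_assoc)
  also have "\<dots> = P (n + Suc k) ** prodA As n (Suc k)"
    by (simp add: assms matrix_mul_assoc)
  finally show ?case .
qed simp

lemma nat_floor_bounds:
  fixes t :: real
  assumes "1 \<le> t"
  shows "1 \<le> nat \<lfloor>t\<rfloor>" "real (nat \<lfloor>t\<rfloor>) \<le> t" "t < real (nat \<lfloor>t\<rfloor>) + 1"
  using assms by (auto simp: le_nat_iff)

lemma powr_neg_ratio_le:
  fixes m n s t lam :: real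
  assumes "1 \<le> n" "n \<le> s" "s \<le> t" "t < m + 1" "1 \<le> m" "0 \<le> lam"
  shows "(m / n) powr (- lam) \<le> 2 powr lam * (t / s) powr (- lam)"
proof -
  have "t / s \<le> (2 * m) / n"
    using assms by (intro frac_le) auto
  then have "n / m \<le> 2 / (t / s)"
    using assms by (simp add: field_simps)
  then have "(n / m) powr lam \<le> (2 / (t / s)) powr lam"
    using assms by (intro powr_mono2) auto
  then show ?thesis
    using assms by (simp add: powr_minus_divide powr_divide powr_mult)
qed

locale cocycle =
  fixes T :: "real \<Rightarrow> real \<Rightarrow> real^'d::finite^'d"
  assumes cocycle: "\<And>t r s. 1 \<le> t \<Longrightarrow> 1 \<le> r \<Longrightarrow> 1 \<le> s \<Longrightarrow> T t r ** T r s = T t s"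
    and T_refl: "\<And>s. 1 \<le> s \<Longrightarrow> T s s = mat 1"
begin

lemma cocycle_right: "1 \<le> t \<Longrightarrow> 1 \<le> r \<Longrightarrow> 1 \<le> s \<Longrightarrow> X ** T t r ** T r s = X ** T t s"
  by (simp flip: matrix_mul_assoc add: cocycle)

lemma prodA_sampled:
  assumes "1 \<le> n"
  shows "prodA (\<lambda>n. T (real n + 1) (real n)) n k = T (real (n + k)) (real n)"
proof (induction k)
  case (Suc k)
  then show ?case
    using assms by (simp add: cocycle add.commute)
qed (use assms in \<open>simp add: T_refl\<close>)

lemma calA_sampled:
  assumes "1 \<le> m" "1 \<le> n"
  shows "calA (\<lambda>n. T (real n + 1) (real n)) m n = T (real m) (real n)"
proof (cases "n \<le> m")
  case True
  then show ?thesis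
    using prodA_sampled[OF \<open>1 \<le> n\<close>, of "m - n"] by (simp add: calA_def)
next
  case False
  then have "calA (\<lambda>n. T (real n + 1) (real n)) m n = matrix_inv (T (real n) (real m))"
    using prodA_sampled[OF \<open>1 \<le> m\<close>, of "n - m"] by (simp add: calA_def)
  also have "\<dots> = T (real m) (real n)"
    using assms by (intro matrix_inv_unique) (simp_all add: cocycle T_refl)
  finally show ?thesis .
qed

lemma sampled_T_commute:
  assumes "\<forall>j\<ge>1. T (real j + 1) (real j) ** P j = P (Suc j) ** T (real j + 1) (real j)"
    and "1 \<le> n" "n \<le> m"
  shows "T (real m) (real n) ** P n = P m ** T (real m) (real n)"
  using prodA_commute[of n "\<lambda>n. T (real n + 1) (real n)" P "m - n"] assms
  by (simp add: prodA_sampled)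

lemma disc_dichotomy_if_cont:
  assumes "strong_poly_dichotomy_cont T N"
  shows "strong_poly_dichotomy_disc (\<lambda>n. T (real n + 1) (real n)) (\<lambda>n. N (real n))"
proof -
  obtain K a lam P where "K > 0" "a \<ge> lam" "lam > 0"
    and idem: "\<forall>t\<ge>1. P t ** P t = P t"
    and comm: "\<forall>t s. 1 \<le> s \<and> s \<le> t \<longrightarrow> P t ** T t s = T t s ** P s"
    and bounds: "\<forall>t s x. 1 \<le> s \<and> s \<le> t \<longrightarrow>
           N t (T t s *v (P s *v x)) \<le> K * (t / s) powr (-lam) * N s x \<and>
           N s (T s t *v ((mat 1 - P t) *v x)) \<le> K * (t / s) powr (-lam) * N t x \<and>
           N t (T t s *v x) \<le> K * (t / s) powr a * N s x \<and>
           N s (T s t *v x) \<le> K * (t / s) powr a * N t x"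
    using assms unfolding strong_poly_dichotomy_cont_def by blast
  have "T (real n + 1) (real n) ** P (real n) = P (real (Suc n)) ** T (real n + 1) (real n)"
    if "1 \<le> n" for n
    using comm[rule_format, of "real n" "real n + 1"] that by (simp add: add.commute)
  with \<open>K > 0\<close> \<open>a \<ge> lam\<close> \<open>lam > 0\<close> idem bounds show ?thesis
    unfolding strong_poly_dichotomy_disc_def
    by (intro exI[of _ K] exI[of _ a] exI[of _ lam] exI[of _ "\<lambda>n. P (real n)"]) (simp add: calA_sampled)
qed

definition interpolated_projection :: "(nat \<Rightarrow> real^'d^'d) \<Rightarrow> real \<Rightarrow> real^'d^'d" where
  "interpolated_projection P t = T t (real (nat \<lfloor>t\<rfloor>)) ** P (nat \<lfloor>t\<rfloor>) ** T (real (nat \<lfloor>t\<rfloor>)) t"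

lemma interpolated_projection_idem:
  assumes idem: "\<forall>n\<ge>1. P n ** P n = P n" and "1 \<le> t"
  shows "interpolated_projection P t ** interpolated_projection P t = interpolated_projection P t"
proof -
  define m where "m = nat \<lfloor>t\<rfloor>"
  have "1 \<le> m" "1 \<le> real m"
    using \<open>1 \<le> t\<close> by (auto simp: m_def le_nat_iff)
  have "interpolated_projection P t ** interpolated_projection P t
      = T t m ** P m ** (T m t ** T t m) ** P m ** T m t"
    by (simp add: interpolated_projection_def m_def matrix_mul_assoc)
  also have "\<dots> = T t m ** (P m ** P m) ** T m t"
    using \<open>1 \<le> real m\<close> \<open>1 \<le> t\<close> by (simp add: cocycle T_refl matrix_mul_assoc)
  also have "\<dots> = interpolated_projection P t"
    using idem \<open>1 \<le> m\<close> by (simp add: interpolated_projection_def m_def)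
  finally show ?thesis .
qed

lemma interpolated_projection_commute:
  assumes comm: "\<forall>j\<ge>1. T (real j + 1) (real j) ** P j = P (Suc j) ** T (real j + 1) (real j)"
    and "1 \<le> s" "s \<le> t"
  shows "interpolated_projection P t ** T t s = T t s ** interpolated_projection P s"
proof -
  define m n where "m = nat \<lfloor>t\<rfloor>" and "n = nat \<lfloor>s\<rfloor>"
  have "1 \<le> n" "n \<le> m" "1 \<le> real m" "1 \<le> real n" "1 \<le> t"
    using nat_floor_bounds[of s] \<open>1 \<le> s\<close> \<open>s \<le> t\<close>
    by (auto simp: m_def n_def intro: nat_mono floor_mono)
  have "interpolated_projection P t ** T t s = T t m ** (P m ** T m n) ** T n s"
    using \<open>1 \<le> real m\<close> \<open>1 \<le> real n\<close> \<open>1 \<le> s\<close> \<open>1 \<le> t\<close>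
    by (simp add: interpolated_projection_def m_def matrix_mul_assoc cocycle_right)
  also have "\<dots> = T t m ** (T m n ** P n) ** T n s"
    using sampled_T_commute[OF comm \<open>1 \<le> n\<close> \<open>n \<le> m\<close>] by simp
  also have "\<dots> = T t s ** interpolated_projection P s"
    using \<open>1 \<le> real m\<close> \<open>1 \<le> real n\<close> \<open>1 \<le> s\<close> \<open>1 \<le> t\<close>
    by (simp add: interpolated_projection_def n_def matrix_mul_assoc cocycle cocycle_right)
  finally show ?thesis .
qed

end

locale poly_bounded_cocycle = cocycle T for T :: "real \<Rightarrow> real \<Rightarrow> real^'d::finite^'d" +
  fixes N :: "real \<Rightarrow> real^'d \<Rightarrow> real" and K0 a0 :: real
  assumes N_nonneg: "\<And>t x. 1 \<le> t \<Longrightarrow> 0 \<le> N t x"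
    and K0_pos: "0 < K0" and a0_nonneg: "0 \<le> a0"
    and growth_forward: "\<And>t s x. 1 \<le> s \<Longrightarrow> s \<le> t \<Longrightarrow> N t (T t s *v x) \<le> K0 * (t / s) powr a0 * N s x"
    and growth_backward: "\<And>t s x. 1 \<le> s \<Longrightarrow> s \<le> t \<Longrightarrow> N s (T s t *v x) \<le> K0 * (t / s) powr a0 * N t x"
begin

lemma growth_within_unit:
  assumes "1 \<le> m" "m \<le> t" "t < m + 1"
  shows "N t (T t m *v x) \<le> K0 * 2 powr a0 * N m x"
    and "N m (T m t *v x) \<le> K0 * 2 powr a0 * N t x"
proof -
  have "(t / m) powr a0 \<le> 2 powr a0"
    using assms a0_nonneg by (intro powr_mono2) (auto simp: field_simps)
  then have factor: "K0 * (t / m) powr a0 * N u y \<le> K0 * 2 powr a0 * N u y" if "1 \<le> u" for u y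
    using K0_pos N_nonneg[OF that] by (intro mult_right_mono) auto
  show "N t (T t m *v x) \<le> K0 * 2 powr a0 * N m x"
    using order_trans[OF growth_forward factor] assms by simp
  show "N m (T m t *v x) \<le> K0 * 2 powr a0 * N t x"
    using order_trans[OF growth_backward factor] assms by simp
qed

lemma interpolated_stable_bound:
  assumes stable: "\<And>m n y. 1 \<le> n \<Longrightarrow> n \<le> m \<Longrightarrow>
      N (real m) (T (real m) (real n) *v (P n *v y)) \<le> K * (real m / real n) powr (- lam) * N (real n) y"
    and "0 \<le> K" "0 \<le> lam" "1 \<le> s" "s \<le> t"
  shows "N t (T t s *v (interpolated_projection P s *v x))
    \<le> (K0 * 2 powr a0)\<^sup>2 * K * 2 powr lam * (t / s) powr (- lam) * N s x"
proof -
  define m n where "m = nat \<lfloor>t\<rfloor>" and "n = nat \<lfloor>s\<rfloor>"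
  define C where "C = K0 * 2 powr a0"
  have "1 \<le> t" using assms by simp
  note m = nat_floor_bounds[OF this, folded m_def] and n = nat_floor_bounds[OF \<open>1 \<le> s\<close>, folded n_def]
  have "n \<le> m" using \<open>s \<le> t\<close> by (simp add: m_def n_def floor_mono nat_mono)
  have "0 \<le> C" using K0_pos by (simp add: C_def)
  define y where "y = T n s *v x"
  have "T t s *v (interpolated_projection P s *v x) = T t m *v (T m n *v (P n *v y))"
    using m n \<open>1 \<le> s\<close> \<open>1 \<le> t\<close>
    by (simp add: y_def interpolated_projection_def flip: n_def)
       (simp add: matrix_vector_mul_assoc matrix_mul_assoc cocycle cocycle_right)
  also have "N t \<dots> \<le> C * N m (T m n *v (P n *v y))"
    using growth_within_unit(1) m by (simp add: C_def)
  also have "\<dots> \<le> C * (K * (m / n) powr (- lam) * N n y)"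
    using stable[OF n(1) \<open>n \<le> m\<close>] \<open>0 \<le> C\<close> by (rule mult_left_mono)
  also have "\<dots> \<le> C * (K * (m / n) powr (- lam) * (C * N s x))"
    using growth_within_unit(2)[of n s x] n \<open>0 \<le> C\<close> \<open>0 \<le> K\<close>
    by (auto simp: y_def C_def intro!: mult_left_mono)
  also have "\<dots> \<le> C * (K * (2 powr lam * (t / s) powr (- lam)) * (C * N s x))"
    using powr_neg_ratio_le[of n s t m lam] m n assms \<open>0 \<le> C\<close> N_nonneg[of s x]
    by (auto intro!: mult_left_mono mult_right_mono)
  also have "\<dots> = C\<^sup>2 * K * 2 powr lam * (t / s) powr (- lam) * N s x"
    by (simp add: power2_eq_square algebra_simps)
  finally show ?thesis by (simp add: C_def)
qed

lemma interpolated_unstable_bound: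
  assumes unstable: "\<And>m n y. 1 \<le> n \<Longrightarrow> n \<le> m \<Longrightarrow>
      N (real n) (T (real n) (real m) *v ((mat 1 - P m) *v y)) \<le> K * (real m / real n) powr (- lam) * N (real m) y"
    and "0 \<le> K" "0 \<le> lam" "1 \<le> s" "s \<le> t"
  shows "N s (T s t *v ((mat 1 - interpolated_projection P t) *v x))
    \<le> (K0 * 2 powr a0)\<^sup>2 * K * 2 powr lam * (t / s) powr (- lam) * N t x"
proof -
  define m n where "m = nat \<lfloor>t\<rfloor>" and "n = nat \<lfloor>s\<rfloor>"
  define C where "C = K0 * 2 powr a0"
  have "1 \<le> t" using assms by simp
  note m = nat_floor_bounds[OF this, folded m_def] and n = nat_floor_bounds[OF \<open>1 \<le> s\<close>, folded n_def]
  have "n \<le> m" using \<open>s \<le> t\<close> by (simp add: m_def n_def floor_mono nat_mono)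
  have "0 \<le> C" using K0_pos by (simp add: C_def)
  define y where "y = T m t *v x"
  have "T s t *v ((mat 1 - interpolated_projection P t) *v x) = T s n *v (T n m *v ((mat 1 - P m) *v y))"
    using m n \<open>1 \<le> s\<close> \<open>1 \<le> t\<close>
    by (simp add: y_def interpolated_projection_def flip: m_def)
       (simp add: matrix_vector_mul_assoc matrix_mul_assoc matrix_mul_diff_left matrix_mul_diff_right
         cocycle cocycle_right)
  also have "N s \<dots> \<le> C * N n (T n m *v ((mat 1 - P m) *v y))"
    using growth_within_unit(1) n by (simp add: C_def)
  also have "\<dots> \<le> C * (K * (m / n) powr (- lam) * N m y)"
    using unstable[OF n(1) \<open>n \<le> m\<close>] \<open>0 \<le> C\<close> by (rule mult_left_mono)
  also have "\<dots> \<le> C * (K * (m / n) powr (- lam) * (C * N t x))"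
    using growth_within_unit(2)[of m t x] m \<open>0 \<le> C\<close> \<open>0 \<le> K\<close>
    by (auto simp: y_def C_def intro!: mult_left_mono)
  also have "\<dots> \<le> C * (K * (2 powr lam * (t / s) powr (- lam)) * (C * N t x))"
    using powr_neg_ratio_le[of n s t m lam] m n assms \<open>0 \<le> C\<close> N_nonneg[of t x] \<open>1 \<le> t\<close>
    by (auto intro!: mult_left_mono mult_right_mono)
  also have "\<dots> = C\<^sup>2 * K * 2 powr lam * (t / s) powr (- lam) * N t x"
    by (simp add: power2_eq_square algebra_simps)
  finally show ?thesis by (simp add: C_def)
qed

lemma cont_dichotomy_if_disc:
  assumes "strong_poly_dichotomy_disc (\<lambda>n. T (real n + 1) (real n)) (\<lambda>n. N (real n))"
  shows "strong_poly_dichotomy_cont T N"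
proof -
  obtain K lam P where "K > 0" "lam > 0"
    and idem: "\<forall>n\<ge>1. P n ** P n = P n"
    and comm: "\<forall>n\<ge>1. T (real n + 1) (real n) ** P n = P (Suc n) ** T (real n + 1) (real n)"
    and disc_bounds: "\<forall>m n x. 1 \<le> n \<and> n \<le> m \<longrightarrow>
      N m (calA (\<lambda>n. T (real n + 1) (real n)) m n *v (P n *v x))
        \<le> K * (real m / real n) powr (-lam) * N n x \<and>
      N n (calA (\<lambda>n. T (real n + 1) (real n)) n m *v ((mat 1 - P m) *v x))
        \<le> K * (real m / real n) powr (-lam) * N m x"
    using assms unfolding strong_poly_dichotomy_disc_def by blast
  define D where "D = (K0 * 2 powr a0)\<^sup>2 * K * 2 powr lam"
  have stable: "N t (T t s *v (interpolated_projection P s *v x))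
      \<le> D * (t / s) powr (- lam) * N s x"
    and unstable: "N s (T s t *v ((mat 1 - interpolated_projection P t) *v x))
      \<le> D * (t / s) powr (- lam) * N t x"
    if "1 \<le> s" "s \<le> t" for s t x
    using interpolated_stable_bound[where P=P and K=K and lam=lam]
      interpolated_unstable_bound[where P=P and K=K and lam=lam]
      disc_bounds that \<open>K > 0\<close> \<open>lam > 0\<close> by (simp_all add: calA_sampled D_def)
  have "0 < max K0 D"
    using K0_pos by simp
  have widen: "D * (t / s) powr (- lam) * N u x \<le> max K0 D * (t / s) powr (- lam) * N u x"
    "K0 * (t / s) powr a0 * N u x \<le> max K0 D * (t / s) powr max a0 lam * N u x"
    if "1 \<le> s" "s \<le> t" "1 \<le> u" for s t u x
    using that K0_pos N_nonneg[OF \<open>1 \<le> u\<close>] by (auto intro!: mult_right_mono mult_mono powr_mono)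
  have dichotomy_bounds: "N t (T t s *v (interpolated_projection P s *v x))
        \<le> max K0 D * (t / s) powr (- lam) * N s x \<and>
      N s (T s t *v ((mat 1 - interpolated_projection P t) *v x))
        \<le> max K0 D * (t / s) powr (- lam) * N t x \<and>
      N t (T t s *v x) \<le> max K0 D * (t / s) powr max a0 lam * N s x \<and>
      N s (T s t *v x) \<le> max K0 D * (t / s) powr max a0 lam * N t x"
    if "1 \<le> s" "s \<le> t" for s t x
    using stable[OF that, of x] unstable[OF that, of x] growth_forward[OF that, of x]
      growth_backward[OF that, of x] widen[OF that, of s x] widen[OF that, of t x] that
    by linarith
  show ?thesis
    unfolding strong_poly_dichotomy_cont_def
    by (rule exI[of _ "max K0 D"], rule exI[of _ "max a0 lam"], rule exI[of _ lam],
        rule exI[of _ "interpolated_projection P"])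
      (use \<open>0 < max K0 D\<close> \<open>lam > 0\<close> dichotomy_bounds interpolated_projection_idem[OF idem]
        interpolated_projection_commute[OF comm] in auto)
qed

end

theorem proposition5p2:
  fixes A :: "real \<Rightarrow> real^'d::finite^'d"
    and T :: "real \<Rightarrow> real \<Rightarrow> real^'d::finite^'d"
    and N :: "real \<Rightarrow> real^'d \<Rightarrow> real"
  assumes contA: "continuous_on {1..} A"
    and evol: "is_evolution_family A T"
    and norms: "\<forall>t\<ge>1. is_norm (N t)"
    and growth: "\<exists>K a. K > 0 \<and> a > 0 \<and>
       (\<forall>t s x. 1 \<le> s \<and> s \<le> t \<longrightarrow>
          N t (T t s *v x) \<le> K * (t / s) powr a * N s x \<and>
          N s (T s t *v x) \<le> K * (t / s) powr a * N t x)"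
  shows "strong_poly_dichotomy_cont T N \<longleftrightarrow>
         strong_poly_dichotomy_disc (\<lambda>n. T (real n + 1) (real n)) (\<lambda>n. N (real n))"
proof -
  obtain K0 a0 where "K0 > 0" "a0 > 0"
    and bounded: "\<forall>t s x. 1 \<le> s \<and> s \<le> t \<longrightarrow>
          N t (T t s *v x) \<le> K0 * (t / s) powr a0 * N s x \<and>
          N s (T s t *v x) \<le> K0 * (t / s) powr a0 * N t x"
    using growth by blast
  interpret poly_bounded_cocycle T N K0 a0
  proof
    show "T t r ** T r s = T t s" if "1 \<le> t" "1 \<le> r" "1 \<le> s" for t r s
      using evolution_family_cocycle[OF contA evol that] .
    show "T s s = mat 1" if "1 \<le> s" for s
      using evol that by (simp add: is_evolution_family_def)
    show "0 \<le> N t x" if "1 \<le> t" for t x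
      using norms that is_norm_nonneg by blast
  qed (use \<open>K0 > 0\<close> \<open>a0 > 0\<close> bounded in auto)
  show ?thesis
    using disc_dichotomy_if_cont cont_dichotomy_if_disc by blast
qed

end
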